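(* For any quantum automaton $\mathcal{A}$ over alphabet $\Sigma$ and any $w\in\Sigma^\omega$, $$f^{\mathrm{ND}}_{\mathcal{A}}(w)=\limsup_{n\to\infty}f^{\mathrm{MO}}_{\mathcal{A}}(w_n).$$
   Context: A quantum automaton is a tuple $\mathcal{A}=(\mathcal{H},|s_0\rangle,\Sigma,\{U_\sigma:\sigma\in\Sigma\},F)$ where $\mathcal{H}$ is a finite-dimensional complex Hilbert space, $|s_0\rangle$ a unit vector, $\Sigma$ a finite alphabet, each $U_\sigma$ unitary, and $F$ a subspace with orthogonal projection $P_F$. For a finite word $x=\sigma_1\cdots\sigma_m$, $U_x=U_{\sigma_m}\cdots U_{\sigma_1}$ and $f^{\mathrm{MO}}_{\mathcal{A}}(x)=\|P_FU_x|s_0\rangle\|^2$. For $w\in\Sigma^\omega$, $w_n$ is its prefix of length $n$, the non-disturbing run is $|s_n\rangle=U_{w_n}|s_0\rangle$, and $f^{\mathrm{ND}}_{\mathcal{A}}(w)=\sup_{|\psi\rangle}\sup_{\{n_i\}}\inf_{i\ge1}|\langle\psi|s_{n_i}\rangle|^2$ over unit $|\psi\rangle\in F$ and strictly increasing sequences $0\le n_1<n_2<\cdots$. *)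

theory Defs
  imports "HOL-Analysis.Analysis" "HOL-Library.Extended_Nonnegative_Real"
begin

text \<open>Finite-dimensional complex Hilbert space modelled as complex ^ 'n
  (coordinates w.r.t. an orthonormal basis); 'n is a finite index type.\<close>

definition cinner :: "complex ^ 'n \<Rightarrow> complex ^ 'n \<Rightarrow> complex" where
  "cinner x y = (\<Sum>i\<in>UNIV. cnj (x $ i) * y $ i)"

definition cadjoint :: "complex ^ 'n ^ 'n \<Rightarrow> complex ^ 'n ^ 'n" where
  "cadjoint U = (\<chi> i j. cnj (U $ j $ i))"

definition cunitary :: "complex ^ 'n ^ 'n \<Rightarrow> bool" where
  "cunitary U \<longleftrightarrow> cadjoint U ** U = mat 1 \<and> U ** cadjoint U = mat 1"

definition csubspace :: "(complex ^ 'n) set \<Rightarrow> bool" where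
  "csubspace F \<longleftrightarrow> 0 \<in> F \<and> (\<forall>x\<in>F. \<forall>y\<in>F. x + y \<in> F) \<and> (\<forall>c. \<forall>x\<in>F. c *s x \<in> F)"

definition oproj :: "(complex ^ 'n) set \<Rightarrow> complex ^ 'n \<Rightarrow> complex ^ 'n" where
  "oproj F x = (THE y. y \<in> F \<and> (\<forall>z\<in>F. cinner z (x - y) = 0))"

text \<open>U_x |s\<rangle> for x = sigma_1 ... sigma_m: apply U_sigma_1 first.\<close>
definition run :: "('a \<Rightarrow> complex ^ 'n ^ 'n) \<Rightarrow> complex ^ 'n \<Rightarrow> 'a list \<Rightarrow> complex ^ 'n" where
  "run U s0 xs = fold (\<lambda>\<sigma> v. U \<sigma> *v v) xs s0"

definition fMO :: "('a \<Rightarrow> complex ^ 'n ^ 'n) \<Rightarrow> complex ^ 'n \<Rightarrow> (complex ^ 'n) set \<Rightarrow> 'a list \<Rightarrow> real" where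
  "fMO U s0 F xs = (norm (oproj F (run U s0 xs)))\<^sup>2"

definition wprefix :: "(nat \<Rightarrow> 'a) \<Rightarrow> nat \<Rightarrow> 'a list" where
  "wprefix w n = map w [0..<n]"

text \<open>Non-disturbing acceptance value; supremum taken in ennreal (sup of empty set = 0).\<close>
definition fND :: "('a \<Rightarrow> complex ^ 'n ^ 'n) \<Rightarrow> complex ^ 'n \<Rightarrow> (complex ^ 'n) set \<Rightarrow> (nat \<Rightarrow> 'a) \<Rightarrow> ennreal" where
  "fND U s0 F w = (SUP (\<psi>, ns) \<in> {(\<psi>, ns). \<psi> \<in> F \<and> norm \<psi> = 1 \<and> strict_mono (ns :: nat \<Rightarrow> nat)}.
      (INF i. ennreal ((cmod (cinner \<psi> (run U s0 (wprefix w (ns i)))))\<^sup>2)))"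

end

(* For a single unit vector \<psi> \<in> F, the best value of inf_i |<\<psi>|s_(n_i)>|^2 over subsequences
   is limsup_n |<\<psi>|s_n>|^2, so f^ND is the supremum of these limsups over \<psi>. Each of them is
   at most limsup_n ||P_F s_n||^2 because |<\<psi>|s>| = |<\<psi>|P_F s>| <= ||P_F s||. Conversely, the
   run stays on the unit sphere, so along a subsequence on which ||P_F s_n||^2 tends to its limsup
   the states converge to some l, and \<psi> = P_F l / ||P_F l|| attains that limsup. *)

theory Submission
  imports Defs
begin

lemma inner_eq_Re_cinner: "inner x y = Re (cinner x y)"
  unfolding inner_vec_def cinner_def by (simp add: inner_complex_def)

lemma cinner_commute: "cinner y x = cnj (cinner x y)"
  unfolding cinner_def by (simp add: mult.commute)

lemma cinner_scale_left: "cinner (c *s x) y = cnj c * cinner x y"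
  unfolding cinner_def by (simp add: sum_distrib_left mult.assoc)

lemma cinner_scale_right: "cinner x (c *s y) = c * cinner x y"
  unfolding cinner_def by (simp add: sum_distrib_left algebra_simps)

lemma cinner_add_right: "cinner x (y + z) = cinner x y + cinner x z"
  unfolding cinner_def by (simp add: sum.distrib algebra_simps)

lemma cinner_diff_right: "cinner x (y - z) = cinner x y - cinner x z"
  unfolding cinner_def by (simp add: sum_subtractf algebra_simps)

lemma cinner_self: "cinner x x = of_real ((norm x)\<^sup>2)"
proof -
  have "Im (cinner x x) = 0" unfolding cinner_def by simp
  moreover have "Re (cinner x x) = (norm x)\<^sup>2"
    by (simp add: power2_norm_eq_inner inner_eq_Re_cinner)
  ultimately show ?thesis by (simp add: complex_eq_iff)
qed

lemma scaleR_eq_vector_smult: "r *\<^sub>R (x :: complex ^ 'n) = of_real r *s x"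
  by (simp add: vec_eq_iff of_real_def)

lemma norm_vector_smult: "norm (c *s (x :: complex ^ 'n)) = cmod c * norm x"
proof -
  have "of_real ((norm (c *s x))\<^sup>2) = cinner (c *s x) (c *s x)" by (simp add: cinner_self)
  also have "\<dots> = cnj c * c * cinner x x"
    by (simp add: cinner_scale_left cinner_scale_right)
  also have "\<dots> = of_real ((cmod c * norm x)\<^sup>2)"
    by (simp add: cinner_self power_mult_distrib mult.commute flip: complex_norm_square)
  finally have "(norm (c *s x))\<^sup>2 = (cmod c * norm x)\<^sup>2" using of_real_eq_iff by blast
  then show ?thesis by simp
qed

lemma cinner_cauchy_schwarz: "cmod (cinner x y) \<le> norm x * norm y"
proof -
  define u where "u = cnj (sgn (cinner x y))"
  have "u * cinner x y = of_real (cmod (cinner x y))"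
    unfolding u_def sgn_eq by (simp add: divide_simps mult.commute power2_eq_square flip: complex_norm_square)
  then have "cmod (cinner x y) = Re (cinner x (u *s y))"
    by (simp add: cinner_scale_right)
  also have "\<dots> = inner x (u *s y)" by (simp add: inner_eq_Re_cinner)
  also have "\<dots> \<le> norm x * norm (u *s y)" by (rule norm_cauchy_schwarz)
  also have "\<dots> \<le> norm x * norm y"
    by (simp add: u_def norm_vector_smult norm_sgn mult_left_le)
  finally show ?thesis .
qed

lemma csubspace_imp_subspace: "csubspace F \<Longrightarrow> subspace F"
  unfolding csubspace_def subspace_def by (metis scaleR_eq_vector_smult)

lemma csubspace_scale: "csubspace F \<Longrightarrow> x \<in> F \<Longrightarrow> c *s x \<in> F"
  unfolding csubspace_def by blast

lemma csubspace_add: "csubspace F \<Longrightarrow> x \<in> F \<Longrightarrow> y \<in> F \<Longrightarrow> x + y \<in> F"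
  unfolding csubspace_def by blast

lemma csubspace_diff: "csubspace F \<Longrightarrow> x \<in> F \<Longrightarrow> y \<in> F \<Longrightarrow> x - y \<in> F"
  by (simp add: csubspace_imp_subspace subspace_diff)

lemma orthogonal_projection_exists:
  assumes F: "csubspace F"
  shows "\<exists>y\<in>F. \<forall>z\<in>F. cinner z (x - y) = 0"
proof -
  have span_F: "span F = F" using csubspace_imp_subspace[OF F] by simp
  obtain y d where y: "y \<in> F" and d: "\<And>z. z \<in> F \<Longrightarrow> inner d z = 0" and x: "x = y + d"
    using orthogonal_subspace_decomp_exists[of F x] unfolding span_F orthogonal_def by blast
  have "cinner z d = 0" if z: "z \<in> F" for z
  proof -
    \<comment> \<open>real orthogonality to both z and \<i> z gives complex orthogonality\<close>
    have "Re (cinner d z) = 0" using d[OF z] by (simp add: inner_eq_Re_cinner)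
    moreover have "Im (cinner d z) = 0"
      using d[OF csubspace_scale[OF F z, of \<i>]] by (simp add: inner_eq_Re_cinner cinner_scale_right)
    ultimately show ?thesis by (subst cinner_commute) (simp add: complex_eq_iff)
  qed
  then show ?thesis using x y by (metis add_diff_cancel_left')
qed

lemma orthogonal_projection_unique:
  assumes F: "csubspace F"
    and y1: "y1 \<in> F" "\<forall>z\<in>F. cinner z (x - y1) = 0"
    and y2: "y2 \<in> F" "\<forall>z\<in>F. cinner z (x - y2) = 0"
  shows "y1 = y2"
proof -
  have "y2 - y1 \<in> F" using csubspace_diff[OF F y2(1) y1(1)] .
  then have "cinner (y2 - y1) (x - y1) - cinner (y2 - y1) (x - y2) = 0" using y1 y2 by simp
  then have "cinner (y2 - y1) (y2 - y1) = 0" by (simp flip: cinner_diff_right)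
  then show ?thesis by (simp add: cinner_self)
qed

lemma oproj:
  assumes "csubspace F"
  shows oproj_in: "oproj F x \<in> F"
    and cinner_oproj_orthogonal: "z \<in> F \<Longrightarrow> cinner z (x - oproj F x) = 0"
proof -
  have "\<exists>!y. y \<in> F \<and> (\<forall>z\<in>F. cinner z (x - y) = 0)"
    using orthogonal_projection_exists[OF assms] orthogonal_projection_unique[OF assms] by blast
  then have "oproj F x \<in> F \<and> (\<forall>z\<in>F. cinner z (x - oproj F x) = 0)"
    unfolding oproj_def by (rule theI')
  then show "oproj F x \<in> F" "z \<in> F \<Longrightarrow> cinner z (x - oproj F x) = 0" by auto
qed

lemma oproj_unique:
  assumes "csubspace F" "y \<in> F" "\<forall>z\<in>F. cinner z (x - y) = 0"
  shows "oproj F x = y"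
  using orthogonal_projection_unique[OF assms(1) oproj_in[OF assms(1)] _ assms(2,3)]
    cinner_oproj_orthogonal[OF assms(1)] by blast

lemma cinner_oproj:
  assumes "csubspace F" "z \<in> F"
  shows "cinner z (oproj F x) = cinner z x"
  using cinner_oproj_orthogonal[OF assms] by (simp add: cinner_diff_right)

lemma bounded_linear_oproj:
  assumes F: "csubspace F"
  shows "bounded_linear (oproj F)"
  unfolding linear_conv_bounded_linear[symmetric]
proof (rule linearI)
  fix a b
  show "oproj F (a + b) = oproj F a + oproj F b"
  proof (rule oproj_unique[OF F])
    show "oproj F a + oproj F b \<in> F" by (intro csubspace_add oproj_in F)
    show "\<forall>z\<in>F. cinner z (a + b - (oproj F a + oproj F b)) = 0"
      by (simp add: cinner_diff_right cinner_add_right cinner_oproj F)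
  qed
next
  fix r a
  show "oproj F (r *\<^sub>R a) = r *\<^sub>R oproj F a"
  proof (rule oproj_unique[OF F])
    show "r *\<^sub>R oproj F a \<in> F" by (simp add: scaleR_eq_vector_smult csubspace_scale oproj_in F)
    show "\<forall>z\<in>F. cinner z (r *\<^sub>R a - r *\<^sub>R oproj F a) = 0"
      by (simp add: scaleR_eq_vector_smult cinner_diff_right cinner_scale_right cinner_oproj F)
  qed
qed

lemma cmod_cinner_le_norm_oproj:
  assumes F: "csubspace F" and \<psi>: "\<psi> \<in> F" "norm \<psi> = 1"
  shows "cmod (cinner \<psi> x) \<le> norm (oproj F x)"
  using cinner_cauchy_schwarz[of \<psi> "oproj F x"] by (simp add: cinner_oproj F \<psi>)

lemma exists_unit_cinner_eq_norm_oproj: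
  assumes F: "csubspace F" and nonzero: "oproj F x \<noteq> 0"
  shows "\<exists>\<psi>\<in>F. norm \<psi> = 1 \<and> cmod (cinner \<psi> x) = norm (oproj F x)"
proof -
  define \<psi> where "\<psi> = of_real (1 / norm (oproj F x)) *s oproj F x"
  have "\<psi> \<in> F" unfolding \<psi>_def by (intro csubspace_scale oproj_in F)
  moreover have "norm \<psi> = 1" using nonzero by (simp add: \<psi>_def norm_vector_smult norm_divide)
  moreover have "cinner \<psi> x = of_real (norm (oproj F x))"
  proof -
    have "cinner (oproj F x) x = cinner (oproj F x) (oproj F x)"
      by (simp add: cinner_oproj oproj_in F)
    also have "\<dots> = of_real ((norm (oproj F x))\<^sup>2)" by (rule cinner_self)
    finally show ?thesis using nonzero by (simp add: \<psi>_def cinner_scale_left power2_eq_square)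
  qed
  ultimately show ?thesis by auto
qed

lemma cinner_matrix_vector_mult_left: "cinner (A *v x) y = cinner x (cadjoint A *v y)"
proof -
  have "cinner (A *v x) y = (\<Sum>i\<in>UNIV. \<Sum>j\<in>UNIV. cnj (A$i$j) * cnj (x$j) * y$i)"
    unfolding cinner_def matrix_vector_mult_def by (simp add: sum_distrib_right)
  also have "\<dots> = (\<Sum>j\<in>UNIV. \<Sum>i\<in>UNIV. cnj (A$i$j) * cnj (x$j) * y$i)" by (rule sum.swap)
  also have "\<dots> = cinner x (cadjoint A *v y)"
    unfolding cinner_def matrix_vector_mult_def cadjoint_def by (simp add: sum_distrib_left mult_ac)
  finally show ?thesis .
qed

lemma norm_unitary_mult:
  assumes "cunitary A"
  shows "norm (A *v x) = norm x"
proof -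
  have "cinner (A *v x) (A *v x) = cinner x (cadjoint A *v (A *v x))"
    by (rule cinner_matrix_vector_mult_left)
  also have "cadjoint A *v (A *v x) = x"
    using assms unfolding cunitary_def by (simp add: matrix_vector_mul_assoc)
  finally have "(norm (A *v x))\<^sup>2 = (norm x)\<^sup>2" by (metis cinner_self of_real_eq_iff)
  then show ?thesis by simp
qed

lemma run_wprefix_Suc: "run U s0 (wprefix w (Suc n)) = U (w n) *v run U s0 (wprefix w n)"
  unfolding run_def wprefix_def by simp

lemma norm_run_wprefix:
  assumes "norm s0 = 1" "\<forall>\<sigma>\<in>\<Sigma>. cunitary (U \<sigma>)" "\<forall>i. w i \<in> \<Sigma>"
  shows "norm (run U s0 (wprefix w n)) = 1"
proof (induction n)
  case 0
  then show ?case using assms(1) by (simp add: run_def wprefix_def)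
next
  case (Suc n)
  then show ?case using assms(2,3) by (simp add: run_wprefix_Suc norm_unitary_mult)
qed

lemma SUP_strict_mono_INF_eq_limsup:
  fixes X :: "nat \<Rightarrow> 'a::{complete_linorder, linorder_topology}"
  shows "(SUP ns\<in>{ns :: nat \<Rightarrow> nat. strict_mono ns}. INF i. X (ns i)) = limsup X"
proof (rule antisym)
  show "(SUP ns\<in>{ns :: nat \<Rightarrow> nat. strict_mono ns}. INF i. X (ns i)) \<le> limsup X"
  proof (rule SUP_least)
    fix ns :: "nat \<Rightarrow> nat" assume ns: "ns \<in> {ns :: nat \<Rightarrow> nat. strict_mono ns}"
    have "(INF i. X (ns i)) \<le> liminf (X \<circ> ns)"
      unfolding liminf_SUP_INF by (rule SUP_upper2[of 0]) auto
    also have "\<dots> \<le> limsup (X \<circ> ns)" by (simp add: Liminf_le_Limsup)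
    also have "\<dots> \<le> limsup X" using ns by (simp add: limsup_subseq_mono)
    finally show "(INF i. X (ns i)) \<le> limsup X" .
  qed
next
  obtain r :: "nat \<Rightarrow> nat" where r: "strict_mono r" "(X \<circ> r) \<longlonglongrightarrow> limsup X"
    using limsup_subseq_lim by blast
  have "limsup X = liminf (X \<circ> r)" using r(2) by (simp add: lim_imp_Liminf)
  also have "\<dots> = (SUP N. INF i. X (r (N + i)))"
  proof -
    have "{N..} = plus N ` UNIV" for N :: nat by (metis image_add_atLeast atLeast_0 add_0_right)
    then show ?thesis unfolding liminf_SUP_INF by (simp add: image_comp)
  qed
  also have "\<dots> \<le> (SUP ns\<in>{ns :: nat \<Rightarrow> nat. strict_mono ns}. INF i. X (ns i))"
  proof (rule SUP_least)
    fix N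
    have "strict_mono (\<lambda>i. r (N + i))" using r(1) by (simp add: strict_mono_def)
    then show "(INF i. X (r (N + i))) \<le> (SUP ns\<in>{ns :: nat \<Rightarrow> nat. strict_mono ns}. INF i. X (ns i))"
      by (intro SUP_upper2[of "\<lambda>i. r (N + i)"]) auto
  qed
  finally show "limsup X \<le> (SUP ns\<in>{ns :: nat \<Rightarrow> nat. strict_mono ns}. INF i. X (ns i))" .
qed

lemma SUP_limsup_cinner_eq_limsup_norm_oproj:
  fixes s :: "nat \<Rightarrow> complex ^ 'n"
  assumes F: "csubspace F" and s: "bounded (range s)"
  shows "(SUP \<psi>\<in>{\<psi>\<in>F. norm \<psi> = 1}. limsup (\<lambda>n. ennreal ((cmod (cinner \<psi> (s n)))\<^sup>2)))
    = limsup (\<lambda>n. ennreal ((norm (oproj F (s n)))\<^sup>2))"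
proof (rule antisym)
  show "(SUP \<psi>\<in>{\<psi>\<in>F. norm \<psi> = 1}. limsup (\<lambda>n. ennreal ((cmod (cinner \<psi> (s n)))\<^sup>2)))
    \<le> limsup (\<lambda>n. ennreal ((norm (oproj F (s n)))\<^sup>2))"
    by (intro SUP_least Limsup_mono always_eventually allI ennreal_leI power_mono
        cmod_cinner_le_norm_oproj[OF F]) auto
next
  define a where "a n = ennreal ((norm (oproj F (s n)))\<^sup>2)" for n
  obtain r :: "nat \<Rightarrow> nat" where r: "strict_mono r" "(a \<circ> r) \<longlonglongrightarrow> limsup a"
    using limsup_subseq_lim by blast
  have "bounded (range (s \<circ> r))" using s by (rule bounded_subset) auto
  then obtain r' :: "nat \<Rightarrow> nat" and l where r': "strict_mono r'" "(s \<circ> r \<circ> r') \<longlonglongrightarrow> l"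
    using bounded_imp_convergent_subsequence by blast
  define ns where "ns = r \<circ> r'"
  have ns: "strict_mono ns" "(\<lambda>i. s (ns i)) \<longlonglongrightarrow> l"
    using strict_mono_o[OF r(1) r'(1)] r'(2) by (simp_all add: ns_def o_def)
  have "(\<lambda>i. a (ns i)) \<longlonglongrightarrow> ennreal ((norm (oproj F l))\<^sup>2)"
    unfolding a_def by (intro tendsto_intros bounded_linear.tendsto[OF bounded_linear_oproj[OF F] ns(2)])
  moreover have "(\<lambda>i. a (ns i)) \<longlonglongrightarrow> limsup a"
    using LIMSEQ_subseq_LIMSEQ[OF r(2) r'(1)] by (simp add: ns_def o_def)
  ultimately have limsup_a: "limsup a = ennreal ((norm (oproj F l))\<^sup>2)"
    using LIMSEQ_unique by blast
  show "limsup a \<le> (SUP \<psi>\<in>{\<psi>\<in>F. norm \<psi> = 1}. limsup (\<lambda>n. ennreal ((cmod (cinner \<psi> (s n)))\<^sup>2)))"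
  proof (cases "oproj F l = 0")
    case True
    then show ?thesis by (simp add: limsup_a)
  next
    case False
    then obtain \<psi> where \<psi>: "\<psi> \<in> F" "norm \<psi> = 1" "cmod (cinner \<psi> l) = norm (oproj F l)"
      using exists_unit_cinner_eq_norm_oproj[OF F] by blast
    let ?b = "\<lambda>n. ennreal ((cmod (cinner \<psi> (s n)))\<^sup>2)"
    have "(\<lambda>i. cinner \<psi> (s (ns i))) \<longlonglongrightarrow> cinner \<psi> l"
      unfolding cinner_def by (intro tendsto_intros ns(2))
    then have "(?b \<circ> ns) \<longlonglongrightarrow> limsup a"
      unfolding limsup_a \<psi>(3)[symmetric] o_def by (intro tendsto_intros)
    then have "limsup a = limsup (?b \<circ> ns)" by (simp add: lim_imp_Limsup)
    also have "\<dots> \<le> limsup ?b" using ns(1) by (rule limsup_subseq_mono)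
    also have "\<dots> \<le> (SUP \<psi>\<in>{\<psi>\<in>F. norm \<psi> = 1}. limsup (\<lambda>n. ennreal ((cmod (cinner \<psi> (s n)))\<^sup>2)))"
      using \<psi> by (intro SUP_upper) auto
    finally show ?thesis .
  qed
qed

lemma fND_eq_SUP_limsup:
  "fND U s0 F w
    = (SUP \<psi>\<in>{\<psi>\<in>F. norm \<psi> = 1}. limsup (\<lambda>n. ennreal ((cmod (cinner \<psi> (run U s0 (wprefix w n))))\<^sup>2)))"
proof -
  let ?X = "\<lambda>\<psi> n. ennreal ((cmod (cinner \<psi> (run U s0 (wprefix w n))))\<^sup>2)"
  have "fND U s0 F w
      = (SUP \<psi>\<in>{\<psi>\<in>F. norm \<psi> = 1}. SUP ns\<in>{ns :: nat \<Rightarrow> nat. strict_mono ns}. INF i. ?X \<psi> (ns i))"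
    unfolding fND_def by (rule antisym) (auto intro!: SUP_least SUP_upper2)
  also have "\<dots> = (SUP \<psi>\<in>{\<psi>\<in>F. norm \<psi> = 1}. limsup (?X \<psi>))"
    by (intro SUP_cong refl SUP_strict_mono_INF_eq_limsup)
  finally show ?thesis .
qed

theorem proposition2:
  fixes \<Sigma> :: "'a set" and U :: "'a \<Rightarrow> complex ^ 'n ^ 'n" and s0 :: "complex ^ 'n"
    and F :: "(complex ^ 'n) set" and w :: "nat \<Rightarrow> 'a"
  assumes "finite \<Sigma>"
    and "norm s0 = 1"
    and "\<forall>\<sigma>\<in>\<Sigma>. cunitary (U \<sigma>)"
    and "csubspace F"
    and "\<forall>i. w i \<in> \<Sigma>"
  shows "fND U s0 F w = limsup (\<lambda>n. ennreal (fMO U s0 F (wprefix w n)))"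
proof -
  have "bounded (range (\<lambda>n. run U s0 (wprefix w n)))"
    using norm_run_wprefix[OF assms(2,3,5)] by (auto simp: bounded_iff)
  then show ?thesis
    by (simp add: fND_eq_SUP_limsup fMO_def SUP_limsup_cinner_eq_limsup_norm_oproj assms(4))
qed

end
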